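(* Let $(H,B_1,B_2)$ be a Rota-Baxter system of Hopf algebras, $G(H)$ the group of group-like elements of $H$ and $P(H)$ the Lie algebra of primitive elements of $H$. Then $B_1,B_2$ map $G(H)$ into $G(H)$ and $P(H)$ into $P(H)$, $(G(H),B_1|_{G(H)},S\circ B_2|_{G(H)})$ is a Rota-Baxter system of groups, and $(P(H),B_1|_{P(H)},-B_2|_{P(H)})$ is a Rota-Baxter system of Lie algebras.
   Context: $\mathbb{F}$ is a field of characteristic $0$; Sweedler notation $\Delta(a)=a_1\otimes a_2$. A Rota-Baxter system of Hopf algebras is a triple $(H,B_1,B_2)$ where $(H,\cdot,1,\Delta,\epsilon,S)$ is a cocommutative Hopf algebra and $B_1,B_2:H\to H$ are coalgebra homomorphisms with $B_1(1)=B_2(1)=1$ such that for all $a,b\in H$: $B_1(a)B_1(b)=B_1(B_1(a_1)bS(B_2(a_2)))$ and $B_2(a)B_2(b)=B_2(B_1(a_1)bS(B_2(a_2)))$. A Rota-Baxter system of groups is a group $G$ with maps $R_1,R_2:G\to G$ such that $R_1(a)R_1(b)=R_1(R_1(a)bR_2(a))$ and $R_2(b)R_2(a)=R_2(R_1(a)bR_2(a))$ for all $a,b\in G$. A Rota-Baxter system of Lie algebras is a Lie algebra $\mathfrak{g}$ with linear maps $R_1,R_2$ such that $[R_1(a),R_1(b)]=R_1([R_1(a),R_1(b)]-[R_2(a),R_2(b)])$ and $[R_2(b),R_2(a)]=R_2([R_1(a),R_1(b)]-[R_2(a),R_2(b)])$ for all $a,b\in\mathfrak{g}$. The bracket on $P(H)$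 is the commutator $[a,b]=ab-ba$. *)

theory Defs
  imports "HOL-Algebra.Group" "HOL-Library.Function_Algebras" "HOL.Vector_Spaces"
begin

text \<open>Elements of the free vector
space on H x H (resp. H x H x H) are finitely supported functions to 'k. The tensor
product H (x) H is the quotient of this free space by the subspace spanned by the
bilinearity relations; we work with representatives and the equivalence teq2 / teq3.\<close>

definition delta :: "'a \<Rightarrow> 'a \<Rightarrow> 'k::zero_neq_one" where
  "delta p = (\<lambda>q. if q = p then 1 else 0)"

definition fscale :: "'k::times \<Rightarrow> ('a \<Rightarrow> 'k) \<Rightarrow> ('a \<Rightarrow> 'k)" where
  "fscale c g = (\<lambda>x. c * g x)"

definition fin_supp :: "('a \<Rightarrow> 'k::zero) \<Rightarrow> bool" where
  "fin_supp t \<longleftrightarrow> finite {p. t p \<noteq> 0}"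

definition lin_ext :: "('k \<Rightarrow> 'b \<Rightarrow> 'b) \<Rightarrow> ('a \<Rightarrow> 'k::zero) \<Rightarrow> ('a \<Rightarrow> 'b) \<Rightarrow> 'b::comm_monoid_add" where
  "lin_ext sc t f = (\<Sum>p | t p \<noteq> 0. sc (t p) (f p))"

definition rel2 :: "('k::field \<Rightarrow> 'h::plus \<Rightarrow> 'h) \<Rightarrow> ('h \<times> 'h \<Rightarrow> 'k) set" where
  "rel2 smul =
     {delta (x + x', y) - delta (x, y) - delta (x', y) | x x' y. True}
   \<union> {delta (x, y + y') - delta (x, y) - delta (x, y') | x y y'. True}
   \<union> {delta (smul c x, y) - fscale c (delta (x, y)) | c x y. True}
   \<union> {delta (x, smul c y) - fscale c (delta (x, y)) | c x y. True}"

definition rel3 :: "('k::field \<Rightarrow> 'h::plus \<Rightarrow> 'h) \<Rightarrow> ('h \<times> 'h \<times> 'h \<Rightarrow> 'k) set" where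
  "rel3 smul =
     {delta (x + x', y, z) - delta (x, y, z) - delta (x', y, z) | x x' y z. True}
   \<union> {delta (x, y + y', z) - delta (x, y, z) - delta (x, y', z) | x y y' z. True}
   \<union> {delta (x, y, z + z') - delta (x, y, z) - delta (x, y, z') | x y z z'. True}
   \<union> {delta (smul c x, y, z) - fscale c (delta (x, y, z)) | c x y z. True}
   \<union> {delta (x, smul c y, z) - fscale c (delta (x, y, z)) | c x y z. True}
   \<union> {delta (x, y, smul c z) - fscale c (delta (x, y, z)) | c x y z. True}"

definition teq2 :: "('k::field \<Rightarrow> 'h::plus \<Rightarrow> 'h) \<Rightarrow> ('h \<times> 'h \<Rightarrow> 'k) \<Rightarrow> ('h \<times> 'h \<Rightarrow> 'k) \<Rightarrow> bool" where
  "teq2 smul t u \<longleftrightarrow> t - u \<in> module.span fscale (rel2 smul)"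

definition teq3 :: "('k::field \<Rightarrow> 'h::plus \<Rightarrow> 'h) \<Rightarrow> ('h \<times> 'h \<times> 'h \<Rightarrow> 'k) \<Rightarrow> ('h \<times> 'h \<times> 'h \<Rightarrow> 'k) \<Rightarrow> bool" where
  "teq3 smul t u \<longleftrightarrow> t - u \<in> module.span fscale (rel3 smul)"

definition tmul2 :: "('h \<times> 'h \<Rightarrow> 'k) \<Rightarrow> ('h \<times> 'h \<Rightarrow> 'k) \<Rightarrow> ('h::times \<times> 'h \<Rightarrow> 'k::field)" where
  "tmul2 t s = lin_ext fscale t (\<lambda>p. lin_ext fscale s (\<lambda>q. delta (fst p * fst q, snd p * snd q)))"

definition f_algebra :: "('k::field \<Rightarrow> 'h::ring_1 \<Rightarrow> 'h) \<Rightarrow> bool" where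
  "f_algebra smul \<longleftrightarrow> vector_space smul \<and>
     (\<forall>c x y. smul c (x * y) = smul c x * y \<and> smul c (x * y) = x * smul c y)"

definition lin_map :: "('k::field \<Rightarrow> 'h::ring_1 \<Rightarrow> 'h) \<Rightarrow> ('h \<Rightarrow> 'h) \<Rightarrow> bool" where
  "lin_map smul f \<longleftrightarrow> (\<forall>c x y. f (smul c x + y) = smul c (f x) + f y)"

definition cocomm_hopf ::
  "('k::field \<Rightarrow> 'h::ring_1 \<Rightarrow> 'h) \<Rightarrow> ('h \<Rightarrow> ('h \<times> 'h \<Rightarrow> 'k)) \<Rightarrow> ('h \<Rightarrow> 'k) \<Rightarrow> ('h \<Rightarrow> 'h) \<Rightarrow> bool" where
  "cocomm_hopf smul \<Delta> \<epsilon> S \<longleftrightarrow>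
     f_algebra smul
     \<comment> \<open>comultiplication: a linear map H \<rightarrow> H (x) H\<close>
     \<and> (\<forall>x. fin_supp (\<Delta> x))
     \<and> (\<forall>c x y. teq2 smul (\<Delta> (smul c x + y)) (fscale c (\<Delta> x) + \<Delta> y))
     \<comment> \<open>counit: a linear map H \<rightarrow> F\<close>
     \<and> (\<forall>c x y. \<epsilon> (smul c x + y) = c * \<epsilon> x + \<epsilon> y)
     \<comment> \<open>coassociativity\<close>
     \<and> (\<forall>a. teq3 smul
            (lin_ext fscale (\<Delta> a) (\<lambda>p. lin_ext fscale (\<Delta> (fst p)) (\<lambda>q. delta (fst q, snd q, snd p))))
            (lin_ext fscale (\<Delta> a) (\<lambda>p. lin_ext fscale (\<Delta> (snd p)) (\<lambda>q. delta (fst p, fst q, snd q)))))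
     \<comment> \<open>counit axioms\<close>
     \<and> (\<forall>a. lin_ext smul (\<Delta> a) (\<lambda>p. smul (\<epsilon> (fst p)) (snd p)) = a)
     \<and> (\<forall>a. lin_ext smul (\<Delta> a) (\<lambda>p. smul (\<epsilon> (snd p)) (fst p)) = a)
     \<comment> \<open>bialgebra: \<Delta> and \<epsilon> are algebra homomorphisms\<close>
     \<and> (\<forall>x y. teq2 smul (\<Delta> (x * y)) (tmul2 (\<Delta> x) (\<Delta> y)))
     \<and> teq2 smul (\<Delta> 1) (delta (1, 1))
     \<and> (\<forall>x y. \<epsilon> (x * y) = \<epsilon> x * \<epsilon> y) \<and> \<epsilon> 1 = 1
     \<comment> \<open>antipode: a linear map with S(a_1) a_2 = \<epsilon>(a) 1 = a_1 S(a_2)\<close>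
     \<and> lin_map smul S
     \<and> (\<forall>a. lin_ext smul (\<Delta> a) (\<lambda>p. S (fst p) * snd p) = smul (\<epsilon> a) 1)
     \<and> (\<forall>a. lin_ext smul (\<Delta> a) (\<lambda>p. fst p * S (snd p)) = smul (\<epsilon> a) 1)
     \<comment> \<open>cocommutativity\<close>
     \<and> (\<forall>a. teq2 smul (\<Delta> a) (\<lambda>(x, y). \<Delta> a (y, x)))"

definition coalg_hom ::
  "('k::field \<Rightarrow> 'h::ring_1 \<Rightarrow> 'h) \<Rightarrow> ('h \<Rightarrow> ('h \<times> 'h \<Rightarrow> 'k)) \<Rightarrow> ('h \<Rightarrow> 'k) \<Rightarrow> ('h \<Rightarrow> 'h) \<Rightarrow> bool" where
  "coalg_hom smul \<Delta> \<epsilon> B \<longleftrightarrow> lin_map smul B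
     \<and> (\<forall>a. teq2 smul (\<Delta> (B a)) (lin_ext fscale (\<Delta> a) (\<lambda>p. delta (B (fst p), B (snd p)))))
     \<and> (\<forall>a. \<epsilon> (B a) = \<epsilon> a)"

definition rbs_hopf ::
  "('k::field \<Rightarrow> 'h::ring_1 \<Rightarrow> 'h) \<Rightarrow> ('h \<Rightarrow> ('h \<times> 'h \<Rightarrow> 'k)) \<Rightarrow> ('h \<Rightarrow> 'k) \<Rightarrow> ('h \<Rightarrow> 'h)
    \<Rightarrow> ('h \<Rightarrow> 'h) \<Rightarrow> ('h \<Rightarrow> 'h) \<Rightarrow> bool" where
  "rbs_hopf smul \<Delta> \<epsilon> S B1 B2 \<longleftrightarrow>
     cocomm_hopf smul \<Delta> \<epsilon> S
     \<and> coalg_hom smul \<Delta> \<epsilon> B1 \<and> coalg_hom smul \<Delta> \<epsilon> B2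
     \<and> B1 1 = 1 \<and> B2 1 = 1
     \<and> (\<forall>a b. B1 a * B1 b = B1 (lin_ext smul (\<Delta> a) (\<lambda>p. B1 (fst p) * b * S (B2 (snd p)))))
     \<and> (\<forall>a b. B2 a * B2 b = B2 (lin_ext smul (\<Delta> a) (\<lambda>p. B1 (fst p) * b * S (B2 (snd p)))))"

definition grouplike ::
  "('k::field \<Rightarrow> 'h::ring_1 \<Rightarrow> 'h) \<Rightarrow> ('h \<Rightarrow> ('h \<times> 'h \<Rightarrow> 'k)) \<Rightarrow> 'h set" where
  "grouplike smul \<Delta> = {g. g \<noteq> 0 \<and> teq2 smul (\<Delta> g) (delta (g, g))}"

definition primitive ::
  "('k::field \<Rightarrow> 'h::ring_1 \<Rightarrow> 'h) \<Rightarrow> ('h \<Rightarrow> ('h \<times> 'h \<Rightarrow> 'k)) \<Rightarrow> 'h set" where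
  "primitive smul \<Delta> = {x. teq2 smul (\<Delta> x) (delta (x, 1) + delta (1, x))}"

definition grouplike_group ::
  "('k::field \<Rightarrow> 'h::ring_1 \<Rightarrow> 'h) \<Rightarrow> ('h \<Rightarrow> ('h \<times> 'h \<Rightarrow> 'k)) \<Rightarrow> 'h monoid" where
  "grouplike_group smul \<Delta> = \<lparr>carrier = grouplike smul \<Delta>, mult = (*), one = 1\<rparr>"

definition rbs_group :: "('a, 'b) monoid_scheme \<Rightarrow> ('a \<Rightarrow> 'a) \<Rightarrow> ('a \<Rightarrow> 'a) \<Rightarrow> bool" where
  "rbs_group G R1 R2 \<longleftrightarrow> group G
     \<and> (\<forall>a\<in>carrier G. R1 a \<in> carrier G \<and> R2 a \<in> carrier G)
     \<and> (\<forall>a\<in>carrier G. \<forall>b\<in>carrier G.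
          R1 a \<otimes>\<^bsub>G\<^esub> R1 b = R1 (R1 a \<otimes>\<^bsub>G\<^esub> b \<otimes>\<^bsub>G\<^esub> R2 a)
        \<and> R2 b \<otimes>\<^bsub>G\<^esub> R2 a = R2 (R1 a \<otimes>\<^bsub>G\<^esub> b \<otimes>\<^bsub>G\<^esub> R2 a))"

definition lie_algebra :: "('k::field \<Rightarrow> 'v::ab_group_add \<Rightarrow> 'v) \<Rightarrow> 'v set \<Rightarrow> ('v \<Rightarrow> 'v \<Rightarrow> 'v) \<Rightarrow> bool" where
  "lie_algebra smul V br \<longleftrightarrow> vector_space smul \<and> module.subspace smul V
     \<and> (\<forall>x\<in>V. \<forall>y\<in>V. br x y \<in> V)
     \<and> (\<forall>c. \<forall>x\<in>V. \<forall>y\<in>V. \<forall>z\<in>V. br (smul c x + y) z = smul c (br x z) + br y z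
                             \<and> br z (smul c x + y) = smul c (br z x) + br z y)
     \<and> (\<forall>x\<in>V. br x x = 0)
     \<and> (\<forall>x\<in>V. \<forall>y\<in>V. \<forall>z\<in>V. br x (br y z) + br y (br z x) + br z (br x y) = 0)"

definition rbs_lie :: "('k::field \<Rightarrow> 'v::ab_group_add \<Rightarrow> 'v) \<Rightarrow> 'v set \<Rightarrow> ('v \<Rightarrow> 'v \<Rightarrow> 'v)
    \<Rightarrow> ('v \<Rightarrow> 'v) \<Rightarrow> ('v \<Rightarrow> 'v) \<Rightarrow> bool" where
  "rbs_lie smul V br R1 R2 \<longleftrightarrow> lie_algebra smul V br
     \<and> (\<forall>a\<in>V. R1 a \<in> V \<and> R2 a \<in> V)
     \<and> (\<forall>c. \<forall>x\<in>V. \<forall>y\<in>V. R1 (smul c x + y) = smul c (R1 x) + R1 y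
                      \<and> R2 (smul c x + y) = smul c (R2 x) + R2 y)
     \<and> (\<forall>a\<in>V. \<forall>b\<in>V.
          br (R1 a) (R1 b) = R1 (br (R1 a) (R1 b) - br (R2 a) (R2 b))
        \<and> br (R2 b) (R2 a) = R2 (br (R1 a) (R1 b) - br (R2 a) (R2 b)))"

end

theory Submission
  imports Defs
begin

text \<open>
  Every claim is obtained by evaluating the Hopf and Rota-Baxter axioms on the tensors
  \<open>\<Delta> g \<equiv> g \<otimes> g\<close> and \<open>\<Delta> x \<equiv> x \<otimes> 1 + 1 \<otimes> x\<close>. This is legitimate because the
  linear extension of a map that is bilinear in the two tensor factors is constant on
  classes modulo the bilinearity relations (the universal property of \<open>H \<otimes> H\<close>).
  Thus the counit gives \<open>\<epsilon> g = 1\<close> and \<open>\<epsilon> x = 0\<close>, the antipode gives \<open>S g \<cdot> g = 1\<close> and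
  \<open>S x = - x\<close>, coalgebra maps fixing 1 preserve group-like and primitive elements, and
  the Rota-Baxter identities specialise to \<open>B\<^sub>i g \<cdot> B\<^sub>i b = B\<^sub>i (B\<^sub>1 g \<cdot> b \<cdot> S (B\<^sub>2 g))\<close>
  and \<open>B\<^sub>i x \<cdot> B\<^sub>i b = B\<^sub>i (B\<^sub>1 x \<cdot> b - b \<cdot> B\<^sub>2 x)\<close>.
  On \<open>G(H)\<close> the antipode is the group inverse, hence reverses products, which turns
  the second identity into the one for \<open>S \<circ> B\<^sub>2\<close>. On \<open>P(H)\<close>, taking \<open>b = 1\<close> gives
  \<open>B\<^sub>i (D y) = B\<^sub>i y\<close> for \<open>D = B\<^sub>1 - B\<^sub>2\<close>, and the Lie identities follow from
  \<open>[B\<^sub>1 a, B\<^sub>1 b] - [B\<^sub>2 a, B\<^sub>2 b] = (B\<^sub>1 a \<cdot> D b - D b \<cdot> B\<^sub>2 a) - (B\<^sub>1 b \<cdot> D a - D a \<cdot> B\<^sub>2 b)\<close>.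
\<close>

section \<open>Finitely supported formal linear combinations\<close>

interpretation fscale: module "fscale :: 'k::field \<Rightarrow> ('a \<Rightarrow> 'k) \<Rightarrow> _"
  by unfold_locales (auto simp: fscale_def fun_eq_iff algebra_simps)

lemma sum_apply: "sum f A x = (\<Sum>a\<in>A. f a x)"
  by (induct A rule: infinite_finite_induct) auto

lemma fin_supp_zero [simp]: "fin_supp (0 :: _ \<Rightarrow> 'k::zero)"
  unfolding fin_supp_def by simp

lemma fin_supp_delta [simp]: "fin_supp (delta p :: _ \<Rightarrow> 'k::zero_neq_one)"
  unfolding fin_supp_def delta_def by simp

lemma fin_supp_add [simp]: "fin_supp t \<Longrightarrow> fin_supp u \<Longrightarrow> fin_supp (t + u :: _ \<Rightarrow> 'k::monoid_add)"
  unfolding fin_supp_def by (rule finite_subset[of _ "{p. t p \<noteq> 0} \<union> {p. u p \<noteq> 0}"]) auto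

lemma fin_supp_diff [simp]: "fin_supp t \<Longrightarrow> fin_supp u \<Longrightarrow> fin_supp (t - u :: _ \<Rightarrow> 'k::group_add)"
  unfolding fin_supp_def by (rule finite_subset[of _ "{p. t p \<noteq> 0} \<union> {p. u p \<noteq> 0}"]) auto

lemma fin_supp_fscale [simp]: "fin_supp t \<Longrightarrow> fin_supp (fscale c t :: _ \<Rightarrow> 'k::mult_zero)"
  unfolding fin_supp_def fscale_def by (rule finite_subset[of _ "{p. t p \<noteq> 0}"]) auto

lemma fin_supp_sum: "(\<And>p. p \<in> A \<Longrightarrow> fin_supp (f p)) \<Longrightarrow> fin_supp (sum f A :: _ \<Rightarrow> 'k::comm_monoid_add)"
  by (induct A rule: infinite_finite_induct) auto

lemma fin_supp_lin_ext: "(\<And>p. fin_supp (\<phi> p)) \<Longrightarrow> fin_supp (lin_ext fscale t \<phi> :: _ \<Rightarrow> 'k::field)"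
  unfolding lin_ext_def by (rule fin_supp_sum) simp

lemma lin_ext_zero [simp]: "lin_ext sc 0 f = 0"
  unfolding lin_ext_def by simp

context module
begin

lemma lin_ext_eq_sum:
  assumes "finite A" and "{p. t p \<noteq> 0} \<subseteq> A"
  shows "lin_ext scale t f = (\<Sum>p\<in>A. scale (t p) (f p))"
  unfolding lin_ext_def by (rule sum.mono_neutral_left) (use assms in auto)

lemma lin_ext_add:
  assumes "fin_supp t" and "fin_supp u"
  shows "lin_ext scale (t + u) f = lin_ext scale t f + lin_ext scale u f"
proof -
  let ?A = "{p. t p \<noteq> 0} \<union> {p. u p \<noteq> 0}"
  have A: "finite ?A" using assms by (auto simp: fin_supp_def)
  have "lin_ext scale (t + u) f = (\<Sum>p\<in>?A. scale ((t + u) p) (f p))"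
    by (rule lin_ext_eq_sum[OF A]) auto
  also have "\<dots> = lin_ext scale t f + lin_ext scale u f"
    using lin_ext_eq_sum[OF A, of t f] lin_ext_eq_sum[OF A, of u f]
    by (auto simp: scale_left_distrib sum.distrib)
  finally show ?thesis .
qed

lemma lin_ext_diff:
  assumes "fin_supp t" and "fin_supp u"
  shows "lin_ext scale (t - u) f = lin_ext scale t f - lin_ext scale u f"
proof -
  let ?A = "{p. t p \<noteq> 0} \<union> {p. u p \<noteq> 0}"
  have A: "finite ?A" using assms by (auto simp: fin_supp_def)
  have "lin_ext scale (t - u) f = (\<Sum>p\<in>?A. scale ((t - u) p) (f p))"
    by (rule lin_ext_eq_sum[OF A]) auto
  also have "\<dots> = lin_ext scale t f - lin_ext scale u f"
    using lin_ext_eq_sum[OF A, of t f] lin_ext_eq_sum[OF A, of u f]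
    by (auto simp: scale_left_diff_distrib sum_subtractf)
  finally show ?thesis .
qed

lemma lin_ext_fscale:
  assumes "fin_supp t"
  shows "lin_ext scale (fscale c t) f = scale c (lin_ext scale t f)"
proof -
  have A: "finite {p. t p \<noteq> 0}" using assms by (simp add: fin_supp_def)
  have "lin_ext scale (fscale c t) f = (\<Sum>p | t p \<noteq> 0. scale (fscale c t p) (f p))"
    by (rule lin_ext_eq_sum[OF A]) (auto simp: fscale_def)
  then show ?thesis by (simp add: lin_ext_def fscale_def scale_sum_right)
qed

lemma lin_ext_delta [simp]: "lin_ext scale (delta p) f = f p"
  using lin_ext_eq_sum[of "{p}" "delta p"] by (simp add: delta_def)

lemma lin_ext_fun_add: "lin_ext scale t (\<lambda>p. f p + g p) = lin_ext scale t f + lin_ext scale t g"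
  unfolding lin_ext_def by (simp add: scale_right_distrib sum.distrib)

lemma lin_ext_fun_diff: "lin_ext scale t (\<lambda>p. f p - g p) = lin_ext scale t f - lin_ext scale t g"
  unfolding lin_ext_def by (simp add: scale_right_diff_distrib sum_subtractf)

lemma lin_ext_in_subspace: "subspace N \<Longrightarrow> (\<And>p. f p \<in> N) \<Longrightarrow> lin_ext scale t f \<in> N"
  unfolding lin_ext_def by (intro subspace_sum subspace_scale)

lemma lin_ext_lin_ext:
  assumes t: "fin_supp (t :: _ \<Rightarrow> 'a)" and \<phi>: "\<And>p. fin_supp (\<phi> p :: _ \<Rightarrow> 'a)"
  shows "lin_ext scale (lin_ext fscale t \<phi>) g = lin_ext scale t (\<lambda>p. lin_ext scale (\<phi> p) g)"
proof -
  have "lin_ext scale (\<Sum>p\<in>A. fscale (t p) (\<phi> p)) g = (\<Sum>p\<in>A. scale (t p) (lin_ext scale (\<phi> p) g))"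
    if "finite A" for A
    using that
  proof (induction A rule: finite_induct)
    case (insert x A)
    have step: "lin_ext scale (fscale (t x) (\<phi> x) + (\<Sum>p\<in>A. fscale (t p) (\<phi> p))) g
        = scale (t x) (lin_ext scale (\<phi> x) g) + lin_ext scale (\<Sum>p\<in>A. fscale (t p) (\<phi> p)) g"
      by (simp add: lin_ext_add lin_ext_fscale fin_supp_sum \<phi>)
    with insert show ?case by (simp only: sum.insert[OF insert.hyps(1,2)])
  qed (simp only: sum.empty lin_ext_zero)
  from this[of "{p. t p \<noteq> 0}"] t show ?thesis
    by (simp add: lin_ext_def[of fscale] lin_ext_def[of scale t] fin_supp_def)
qed

end

lemma lin_ext_fscale_delta:
  assumes "fin_supp t"
  shows "lin_ext fscale t delta = (t :: _ \<Rightarrow> 'k::field)"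
proof
  fix q
  have "lin_ext fscale t delta q = (\<Sum>p | t p \<noteq> 0. if q = p then t p else 0)"
    unfolding lin_ext_def sum_apply by (rule sum.cong) (auto simp: fscale_def delta_def)
  also have "\<dots> = t q"
    using assms by (simp add: fin_supp_def)
  finally show "lin_ext fscale t delta q = t q" .
qed

section \<open>The tensor square\<close>

lemma teq2_refl: "teq2 smul t t"
  unfolding teq2_def by (simp add: fscale.span_zero)

lemma teq2_sym: "teq2 smul t u \<Longrightarrow> teq2 smul u t"
  unfolding teq2_def using fscale.span_neg by fastforce

lemma teq2_trans [trans]: "teq2 smul t u \<Longrightarrow> teq2 smul u v \<Longrightarrow> teq2 smul t v"
  unfolding teq2_def using fscale.span_add by fastforce

lemma teq2_add: "teq2 smul t u \<Longrightarrow> teq2 smul t' u' \<Longrightarrow> teq2 smul (t + t') (u + u')"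
  unfolding teq2_def using fscale.span_add by (fastforce simp: algebra_simps)

lemma teq2_fscale: "teq2 smul t u \<Longrightarrow> teq2 smul (fscale c t) (fscale c u)"
  unfolding teq2_def using fscale.span_scale[of "t - u" _ c]
  by (simp add: fscale.scale_right_diff_distrib)

lemma teq2_delta_add_left: "teq2 smul (delta (x + x', y)) (delta (x, y) + delta (x', y))"
  unfolding teq2_def diff_diff_eq[symmetric] by (rule fscale.span_base) (unfold rel2_def, blast)

lemma teq2_delta_add_right: "teq2 smul (delta (x, y + y')) (delta (x, y) + delta (x, y'))"
  unfolding teq2_def diff_diff_eq[symmetric] by (rule fscale.span_base) (unfold rel2_def, blast)

lemma teq2_delta_scale_left: "teq2 smul (delta (smul c x, y)) (fscale c (delta (x, y)))"
  unfolding teq2_def by (rule fscale.span_base) (unfold rel2_def, blast)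

lemma teq2_delta_scale_right: "teq2 smul (delta (x, smul c y)) (fscale c (delta (x, y)))"
  unfolding teq2_def by (rule fscale.span_base) (unfold rel2_def, blast)

lemma lin_ext_span_rel2_in_subspace:
  fixes smul :: "'k::field \<Rightarrow> 'h::plus \<Rightarrow> 'h" and sc :: "'k \<Rightarrow> 'b::ab_group_add \<Rightarrow> 'b"
  assumes sc: "module sc" and N: "module.subspace sc N"
    and add_left: "\<And>x x' y. g (x + x', y) - g (x, y) - g (x', y) \<in> N"
    and add_right: "\<And>x y y'. g (x, y + y') - g (x, y) - g (x, y') \<in> N"
    and scale_left: "\<And>c x y. g (smul c x, y) - sc c (g (x, y)) \<in> N"
    and scale_right: "\<And>c x y. g (x, smul c y) - sc c (g (x, y)) \<in> N"
    and t: "t \<in> module.span fscale (rel2 smul)"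
  shows "fin_supp t \<and> lin_ext sc t g \<in> N"
proof (rule fscale.span_induct_alt[OF t, where h = "\<lambda>t. fin_supp t \<and> lin_ext sc t g \<in> N"])
  show "fin_supp 0 \<and> lin_ext sc 0 g \<in> N"
    by (simp add: module.subspace_0[OF sc N])
next
  fix c r u
  assume r: "r \<in> rel2 smul" and u: "fin_supp u \<and> lin_ext sc u g \<in> N"
  have "fin_supp r \<and> lin_ext sc r g \<in> N"
    using r unfolding rel2_def
    by (auto simp: module.lin_ext_diff[OF sc] module.lin_ext_fscale[OF sc] module.lin_ext_delta[OF sc]
        intro: add_left add_right scale_left scale_right)
  with u show "fin_supp (fscale c r + u) \<and> lin_ext sc (fscale c r + u) g \<in> N"
    by (simp add: module.lin_ext_add[OF sc] module.lin_ext_fscale[OF sc]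
        module.subspace_add[OF sc N] module.subspace_scale[OF sc N])
qed

lemma lin_ext_teq2_cong:
  fixes smul :: "'k::field \<Rightarrow> 'h::plus \<Rightarrow> 'h" and sc :: "'k \<Rightarrow> 'b::ab_group_add \<Rightarrow> 'b"
  assumes sc: "module sc"
    and "\<And>x x' y. g (x + x', y) = g (x, y) + g (x', y)"
    and "\<And>x y y'. g (x, y + y') = g (x, y) + g (x, y')"
    and "\<And>c x y. g (smul c x, y) = sc c (g (x, y))"
    and "\<And>c x y. g (x, smul c y) = sc c (g (x, y))"
    and "teq2 smul t u" and t: "fin_supp t" and u: "fin_supp u"
  shows "lin_ext sc t g = lin_ext sc u g"
proof -
  have "lin_ext sc (t - u) g \<in> {0}"
    using lin_ext_span_rel2_in_subspace[OF sc module.subspace_single_0[OF sc], where g = g and smul = smul] assms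
    by (simp add: teq2_def)
  then show ?thesis by (simp add: module.lin_ext_diff[OF sc t u])
qed

lemma teq2_lin_ext_cong:
  fixes smul :: "'k::field \<Rightarrow> 'h::plus \<Rightarrow> 'h"
  assumes "\<And>x x' y. teq2 smul (g (x + x', y)) (g (x, y) + g (x', y))"
    and "\<And>x y y'. teq2 smul (g (x, y + y')) (g (x, y) + g (x, y'))"
    and "\<And>c x y. teq2 smul (g (smul c x, y)) (fscale c (g (x, y)))"
    and "\<And>c x y. teq2 smul (g (x, smul c y)) (fscale c (g (x, y)))"
    and "teq2 smul t u" and t: "fin_supp t" and u: "fin_supp u"
  shows "teq2 smul (lin_ext fscale t g) (lin_ext fscale u g)"
proof -
  have "lin_ext fscale (t - u) g \<in> module.span fscale (rel2 smul)"
    using lin_ext_span_rel2_in_subspace[OF fscale.module_axioms fscale.subspace_span, where g = g and smul = smul] assms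
    by (simp add: teq2_def diff_diff_eq)
  then show ?thesis by (simp add: teq2_def fscale.lin_ext_diff[OF t u])
qed

definition rmul2 :: "'h::times \<times> 'h \<Rightarrow> ('h \<times> 'h \<Rightarrow> 'k::field) \<Rightarrow> ('h \<times> 'h \<Rightarrow> 'k)" where
  "rmul2 b t = lin_ext fscale t (\<lambda>p. delta (fst p * fst b, snd p * snd b))"

lemma tmul2_delta: "tmul2 t (delta b) = rmul2 b t"
  unfolding tmul2_def rmul2_def by simp

lemma tmul2_delta_add:
  "tmul2 t (delta a + delta b) = rmul2 a t + rmul2 b (t :: 'h::times \<times> 'h \<Rightarrow> 'k::field)"
  unfolding tmul2_def rmul2_def by (simp add: fscale.lin_ext_add fscale.lin_ext_fun_add)

lemma rmul2_delta [simp]: "rmul2 b (delta p) = delta (fst p * fst b, snd p * snd b)"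
  unfolding rmul2_def by simp

lemma rmul2_add: "fin_supp t \<Longrightarrow> fin_supp u \<Longrightarrow> rmul2 b (t + u) = rmul2 b t + rmul2 b u"
  unfolding rmul2_def by (rule fscale.lin_ext_add)

lemma fin_supp_rmul2 [simp]: "fin_supp (rmul2 b t)"
  unfolding rmul2_def by (rule fin_supp_lin_ext) simp

lemma rmul2_rmul2:
  "fin_supp t \<Longrightarrow> rmul2 c (rmul2 b t) = rmul2 (fst b * fst c, snd b * snd c) (t :: 'h::semigroup_mult \<times> 'h \<Rightarrow> 'k::field)"
  unfolding rmul2_def by (simp add: fscale.lin_ext_lin_ext mult.assoc)

lemma rmul2_one: "fin_supp t \<Longrightarrow> rmul2 (1, 1) t = (t :: 'h::monoid_mult \<times> 'h \<Rightarrow> 'k::field)"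
  unfolding rmul2_def by (simp add: lin_ext_fscale_delta)

lemma lin_map_id: "lin_map smul (\<lambda>x. x)"
  unfolding lin_map_def by simp

lemma lin_map_comp: "lin_map smul f \<Longrightarrow> lin_map smul g \<Longrightarrow> lin_map smul (\<lambda>x. f (g x))"
  unfolding lin_map_def by simp

locale scalar_algebra =
  fixes smul :: "'k::field \<Rightarrow> 'h::ring_1 \<Rightarrow> 'h"
  assumes f_algebra: "f_algebra smul"

sublocale scalar_algebra \<subseteq> V: vector_space smul
  using f_algebra unfolding f_algebra_def by auto

context scalar_algebra
begin

lemma scale_mult_left: "smul c x * y = smul c (x * y)"
  and scale_mult_right: "x * smul c y = smul c (x * y)"
  using f_algebra unfolding f_algebra_def by metis+

lemma lin_map_add: "lin_map smul f \<Longrightarrow> f (x + y) = f x + f y"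
  unfolding lin_map_def by (metis V.scale_one)

lemma lin_map_zero: "lin_map smul f \<Longrightarrow> f 0 = 0"
  using lin_map_add[of f 0 0] by simp

lemma lin_map_scale: "lin_map smul f \<Longrightarrow> f (smul c x) = smul c (f x)"
  unfolding lin_map_def by (metis add_0_right lin_map_zero[unfolded lin_map_def])

lemma lin_map_diff: "lin_map smul f \<Longrightarrow> f (x - y) = f x - f y"
  unfolding lin_map_def by (metis V.scale_minus_left V.scale_one add_uminus_conv_diff add.commute)

lemma lin_ext_mult_cong:
  assumes F: "lin_map smul F" and G: "lin_map smul G"
    and "teq2 smul t u" and "fin_supp t" and "fin_supp u"
  shows "lin_ext smul t (\<lambda>p. F (fst p) * b * G (snd p)) = lin_ext smul u (\<lambda>p. F (fst p) * b * G (snd p))"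
  by (rule lin_ext_teq2_cong[OF V.module_axioms _ _ _ _ assms(3-5)])
    (simp_all add: lin_map_add[OF F] lin_map_add[OF G] lin_map_scale[OF F] lin_map_scale[OF G]
      scale_mult_left scale_mult_right distrib_left distrib_right)

lemma lin_ext_tensor_map_cong:
  assumes B: "lin_map smul B" and "teq2 smul t u" and "fin_supp t" and "fin_supp u"
  shows "teq2 smul (lin_ext fscale t (\<lambda>p. delta (B (fst p), B (snd p))))
                   (lin_ext fscale u (\<lambda>p. delta (B (fst p), B (snd p))))"
  by (rule teq2_lin_ext_cong[OF _ _ _ _ assms(2-4)])
    (simp_all add: lin_map_add[OF B] lin_map_scale[OF B] teq2_delta_add_left teq2_delta_add_right
      teq2_delta_scale_left teq2_delta_scale_right)

lemma rmul2_cong: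
  assumes "teq2 smul t u" and "fin_supp t" and "fin_supp u"
  shows "teq2 smul (rmul2 b t) (rmul2 b u)"
  unfolding rmul2_def
  by (rule teq2_lin_ext_cong[OF _ _ _ _ assms])
    (simp_all add: scale_mult_left distrib_right teq2_delta_add_left teq2_delta_add_right
      teq2_delta_scale_left teq2_delta_scale_right)

lemma tmul2_cong_right:
  assumes "teq2 smul s s'" and "fin_supp s" and "fin_supp s'"
  shows "teq2 smul (tmul2 t s) (tmul2 t s')"
proof -
  let ?L = "\<lambda>s p. lin_ext fscale s (\<lambda>q. delta (fst p * fst q, snd p * snd q)) :: 'h \<times> 'h \<Rightarrow> 'k"
  have "teq2 smul (?L s p) (?L s' p)" for p
    by (rule teq2_lin_ext_cong[OF _ _ _ _ assms])
      (simp_all add: scale_mult_right distrib_left teq2_delta_add_left teq2_delta_add_right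
        teq2_delta_scale_left teq2_delta_scale_right)
  then have "lin_ext fscale t (\<lambda>p. ?L s p - ?L s' p) \<in> module.span fscale (rel2 smul)"
    by (intro fscale.lin_ext_in_subspace fscale.subspace_span) (simp add: teq2_def)
  then show ?thesis unfolding teq2_def tmul2_def by (simp add: fscale.lin_ext_fun_diff)
qed

end

lemma coalg_hom_lin_map: "coalg_hom smul \<Delta> \<epsilon> B \<Longrightarrow> lin_map smul B"
  and coalg_hom_comul:
    "coalg_hom smul \<Delta> \<epsilon> B \<Longrightarrow> teq2 smul (\<Delta> (B a)) (lin_ext fscale (\<Delta> a) (\<lambda>p. delta (B (fst p), B (snd p))))"
  and coalg_hom_counit: "coalg_hom smul \<Delta> \<epsilon> B \<Longrightarrow> \<epsilon> (B a) = \<epsilon> a"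
  by (simp_all add: coalg_hom_def)

lemma grouplike_group_simps [simp]:
  "carrier (grouplike_group smul \<Delta>) = grouplike smul \<Delta>"
  "x \<otimes>\<^bsub>grouplike_group smul \<Delta>\<^esub> y = x * y"
  "\<one>\<^bsub>grouplike_group smul \<Delta>\<^esub> = 1"
  by (simp_all add: grouplike_group_def)

locale hopf_algebra =
  fixes smul :: "'k::field \<Rightarrow> 'h::ring_1 \<Rightarrow> 'h"
    and \<Delta> :: "'h \<Rightarrow> ('h \<times> 'h \<Rightarrow> 'k)"
    and \<epsilon> :: "'h \<Rightarrow> 'k"
    and S :: "'h \<Rightarrow> 'h"
  assumes cocomm_hopf: "cocomm_hopf smul \<Delta> \<epsilon> S"

sublocale hopf_algebra \<subseteq> scalar_algebra smul
  using cocomm_hopf unfolding cocomm_hopf_def by unfold_locales auto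

context hopf_algebra
begin

lemma
  shows comul_fin_supp [simp]: "fin_supp (\<Delta> x)"
    and comul_lin: "teq2 smul (\<Delta> (smul c x + y)) (fscale c (\<Delta> x) + \<Delta> y)"
    and comul_mult: "teq2 smul (\<Delta> (x * y)) (tmul2 (\<Delta> x) (\<Delta> y))"
    and comul_one: "teq2 smul (\<Delta> 1) (delta (1, 1))"
    and counit_lin: "\<epsilon> (smul c x + y) = c * \<epsilon> x + \<epsilon> y"
    and counit_mult: "\<epsilon> (x * y) = \<epsilon> x * \<epsilon> y"
    and counit_one: "\<epsilon> 1 = 1"
    and counit_left: "lin_ext smul (\<Delta> a) (\<lambda>p. smul (\<epsilon> (fst p)) (snd p)) = a"
    and antipode_lin_map: "lin_map smul S"
    and antipode_left: "lin_ext smul (\<Delta> a) (\<lambda>p. S (fst p) * snd p) = smul (\<epsilon> a) 1"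
    and antipode_right: "lin_ext smul (\<Delta> a) (\<lambda>p. fst p * S (snd p)) = smul (\<epsilon> a) 1"
  using cocomm_hopf unfolding cocomm_hopf_def by auto

lemma counit_zero: "\<epsilon> 0 = 0"
  using counit_lin[of "-1" 0 0] by simp

lemma counit_add: "\<epsilon> (x + y) = \<epsilon> x + \<epsilon> y"
  using counit_lin[of 1 x y] by simp

lemma counit_scale: "\<epsilon> (smul c x) = c * \<epsilon> x"
  using counit_lin[of c x 0] by (simp add: counit_zero)

lemma lin_ext_counit_cong:
  assumes "teq2 smul t u" and "fin_supp t" and "fin_supp u"
  shows "lin_ext smul t (\<lambda>p. smul (\<epsilon> (fst p)) (snd p)) = lin_ext smul u (\<lambda>p. smul (\<epsilon> (fst p)) (snd p))"
  by (rule lin_ext_teq2_cong[OF V.module_axioms _ _ _ _ assms])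
    (simp_all add: counit_add counit_scale V.scale_left_distrib V.scale_right_distrib mult.commute)

subsection \<open>Group-like elements\<close>

lemma grouplike_comul: "g \<in> grouplike smul \<Delta> \<Longrightarrow> teq2 smul (\<Delta> g) (delta (g, g))"
  and grouplike_nonzero: "g \<in> grouplike smul \<Delta> \<Longrightarrow> g \<noteq> 0"
  by (simp_all add: grouplike_def)

lemma counit_grouplike:
  assumes g: "g \<in> grouplike smul \<Delta>"
  shows "\<epsilon> g = 1"
proof -
  have "smul (\<epsilon> g) g = smul 1 g"
    using counit_left[of g] lin_ext_counit_cong[OF grouplike_comul[OF g]] by simp
  then show ?thesis using grouplike_nonzero[OF g] V.scale_cancel_right by blast
qed

lemma coalg_hom_grouplike:
  assumes B: "coalg_hom smul \<Delta> \<epsilon> B" and g: "g \<in> grouplike smul \<Delta>"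
  shows "B g \<in> grouplike smul \<Delta>"
proof -
  have "teq2 smul (\<Delta> (B g)) (lin_ext fscale (\<Delta> g) (\<lambda>p. delta (B (fst p), B (snd p))))"
    by (rule coalg_hom_comul[OF B])
  also have "teq2 smul \<dots> (lin_ext fscale (delta (g, g)) (\<lambda>p. delta (B (fst p), B (snd p))))"
    by (rule lin_ext_tensor_map_cong[OF coalg_hom_lin_map[OF B] grouplike_comul[OF g]]) simp_all
  finally have "teq2 smul (\<Delta> (B g)) (delta (B g, B g))" by simp
  moreover have "B g \<noteq> 0"
    using coalg_hom_counit[OF B, of g] counit_grouplike[OF g] counit_zero by auto
  ultimately show ?thesis by (simp add: grouplike_def)
qed

lemma one_grouplike: "1 \<in> grouplike smul \<Delta>"
  using comul_one by (simp add: grouplike_def)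

lemma mult_grouplike:
  assumes g: "g \<in> grouplike smul \<Delta>" and h: "h \<in> grouplike smul \<Delta>"
  shows "g * h \<in> grouplike smul \<Delta>"
proof -
  have "teq2 smul (\<Delta> (g * h)) (tmul2 (\<Delta> g) (\<Delta> h))"
    by (rule comul_mult)
  also have "teq2 smul \<dots> (rmul2 (h, h) (\<Delta> g))"
    using tmul2_cong_right[OF grouplike_comul[OF h]] by (simp add: tmul2_delta)
  also have "teq2 smul \<dots> (delta (g * h, g * h))"
    using rmul2_cong[OF grouplike_comul[OF g], of "(h, h)"] by simp
  finally show ?thesis
    using counit_mult[of g h] counit_grouplike[OF g] counit_grouplike[OF h] counit_zero
    by (auto simp: grouplike_def)
qed

lemma antipode_grouplike_left: "g \<in> grouplike smul \<Delta> \<Longrightarrow> S g * g = 1"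
  using antipode_left[of g] lin_ext_mult_cong[OF antipode_lin_map lin_map_id grouplike_comul, of g 1]
  by (simp add: counit_grouplike)

lemma antipode_grouplike_right: "g \<in> grouplike smul \<Delta> \<Longrightarrow> g * S g = 1"
  using antipode_right[of g] lin_ext_mult_cong[OF lin_map_id antipode_lin_map grouplike_comul, of g 1]
  by (simp add: counit_grouplike)

text \<open>Multiplying \<open>\<Delta> (S g) \<cdot> (g \<otimes> g) \<equiv> 1 \<otimes> 1\<close> on the right by \<open>S g \<otimes> S g\<close>.\<close>

lemma antipode_grouplike:
  assumes g: "g \<in> grouplike smul \<Delta>"
  shows "S g \<in> grouplike smul \<Delta>"
proof -
  have "teq2 smul (rmul2 (g, g) (\<Delta> (S g))) (tmul2 (\<Delta> (S g)) (\<Delta> g))"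
    using tmul2_cong_right[OF teq2_sym[OF grouplike_comul[OF g]]] by (simp add: tmul2_delta)
  also have "teq2 smul \<dots> (\<Delta> (S g * g))"
    by (rule teq2_sym[OF comul_mult])
  also have "teq2 smul \<dots> (delta (1, 1))"
    using comul_one by (simp add: antipode_grouplike_left[OF g])
  finally have "teq2 smul (rmul2 (S g, S g) (rmul2 (g, g) (\<Delta> (S g)))) (rmul2 (S g, S g) (delta (1, 1)))"
    by (rule rmul2_cong) simp_all
  then have "teq2 smul (\<Delta> (S g)) (delta (S g, S g))"
    by (simp add: rmul2_rmul2 rmul2_one antipode_grouplike_right[OF g])
  moreover have "S g \<noteq> 0"
    using antipode_grouplike_left[OF g] by auto
  ultimately show ?thesis by (simp add: grouplike_def)
qed

lemma group_grouplike_group: "group (grouplike_group smul \<Delta>)"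
  by (rule groupI)
    (auto simp: mult_grouplike one_grouplike mult.assoc intro: antipode_grouplike antipode_grouplike_left)

lemma inv_grouplike_group:
  "g \<in> grouplike smul \<Delta> \<Longrightarrow> inv\<^bsub>grouplike_group smul \<Delta>\<^esub> g = S g"
  by (rule group.inv_equality[OF group_grouplike_group])
    (simp_all add: antipode_grouplike antipode_grouplike_left)

lemma antipode_mult_grouplike:
  assumes "g \<in> grouplike smul \<Delta>" and "h \<in> grouplike smul \<Delta>"
  shows "S (g * h) = S h * S g"
  using group.inv_mult_group[OF group_grouplike_group, of g h] assms
  by (simp add: inv_grouplike_group mult_grouplike)

subsection \<open>Primitive elements\<close>

lemma primitive_comul: "x \<in> primitive smul \<Delta> \<Longrightarrow> teq2 smul (\<Delta> x) (delta (x, 1) + delta (1, x))"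
  by (simp add: primitive_def)

lemma teq2_primitive_tensor_lin:
  "teq2 smul (delta (smul c x + y, 1) + delta (1, smul c x + y))
     (fscale c (delta (x, 1) + delta (1, x)) + (delta (y, 1) + delta (1, y)))"
proof -
  have "teq2 smul (delta (smul c x + y, 1) + delta (1, smul c x + y))
      ((fscale c (delta (x, 1)) + delta (y, 1)) + (fscale c (delta (1, x)) + delta (1, y)))"
    by (intro teq2_add teq2_trans[OF teq2_delta_add_left] teq2_trans[OF teq2_delta_add_right]
        teq2_delta_scale_left teq2_delta_scale_right teq2_refl)
  also have "\<dots> = fscale c (delta (x, 1) + delta (1, x)) + (delta (y, 1) + delta (1, y))"
    by (simp add: fscale_def fun_eq_iff algebra_simps)
  finally show ?thesis .
qed

lemma lin_comb_primitive:
  assumes x: "x \<in> primitive smul \<Delta>" and y: "y \<in> primitive smul \<Delta>"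
  shows "smul c x + y \<in> primitive smul \<Delta>"
proof -
  have "teq2 smul (\<Delta> (smul c x + y)) (fscale c (\<Delta> x) + \<Delta> y)"
    by (rule comul_lin)
  also have "teq2 smul \<dots> (fscale c (delta (x, 1) + delta (1, x)) + (delta (y, 1) + delta (1, y)))"
    by (rule teq2_add[OF teq2_fscale[OF primitive_comul[OF x]] primitive_comul[OF y]])
  also have "teq2 smul \<dots> (delta (smul c x + y, 1) + delta (1, smul c x + y))"
    by (rule teq2_sym[OF teq2_primitive_tensor_lin])
  finally show ?thesis by (simp add: primitive_def)
qed

lemma comul_zero: "teq2 smul (\<Delta> 0) 0"
proof -
  have "fscale (-1) (\<Delta> 0) + \<Delta> 0 = 0"
    by (simp add: fscale_def fun_eq_iff)
  then show ?thesis using comul_lin[of "-1" 0 0] by simp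
qed

lemma zero_primitive: "0 \<in> primitive smul \<Delta>"
proof -
  have "teq2 smul (\<Delta> 0) (fscale 0 (delta (0, 1)) + fscale 0 (delta (1, 0)))"
    using comul_zero by (simp only: fscale.scale_zero_left add_0)
  also have "teq2 smul \<dots> (delta (0, 1) + delta (1, 0))"
    using teq2_add[OF teq2_delta_scale_left[of smul 0 0 1] teq2_delta_scale_right[of smul 1 0 0]]
    by (simp add: teq2_sym)
  finally show ?thesis by (simp add: primitive_def)
qed

lemma subspace_primitive: "V.subspace (primitive smul \<Delta>)"
  using lin_comb_primitive[where c = 1] lin_comb_primitive[OF _ zero_primitive]
  by (intro V.subspaceI zero_primitive) auto

lemma coalg_hom_primitive:
  assumes B: "coalg_hom smul \<Delta> \<epsilon> B" and B_one: "B 1 = 1" and x: "x \<in> primitive smul \<Delta>"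
  shows "B x \<in> primitive smul \<Delta>"
proof -
  have "teq2 smul (\<Delta> (B x)) (lin_ext fscale (\<Delta> x) (\<lambda>p. delta (B (fst p), B (snd p))))"
    by (rule coalg_hom_comul[OF B])
  also have "teq2 smul \<dots> (lin_ext fscale (delta (x, 1) + delta (1, x)) (\<lambda>p. delta (B (fst p), B (snd p))))"
    by (rule lin_ext_tensor_map_cong[OF coalg_hom_lin_map[OF B] primitive_comul[OF x]]) simp_all
  also have "\<dots> = delta (B x, 1) + delta (1, B x)"
    by (simp add: fscale.lin_ext_add B_one)
  finally have "teq2 smul (\<Delta> (B x)) (delta (B x, 1) + delta (1, B x))" .
  then show ?thesis unfolding primitive_def ..
qed

lemma comul_mult_primitive:
  assumes x: "x \<in> primitive smul \<Delta>" and y: "y \<in> primitive smul \<Delta>"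
  shows "teq2 smul (\<Delta> (x * y)) (delta (x * y, 1) + delta (y, x) + delta (x, y) + delta (1, x * y))"
proof -
  have "teq2 smul (\<Delta> (x * y)) (tmul2 (\<Delta> x) (\<Delta> y))"
    by (rule comul_mult)
  also have "teq2 smul \<dots> (rmul2 (y, 1) (\<Delta> x) + rmul2 (1, y) (\<Delta> x))"
    using tmul2_cong_right[OF primitive_comul[OF y]] by (simp add: tmul2_delta_add)
  also have "teq2 smul \<dots> (rmul2 (y, 1) (delta (x, 1) + delta (1, x)) + rmul2 (1, y) (delta (x, 1) + delta (1, x)))"
    by (intro teq2_add rmul2_cong primitive_comul[OF x]) simp_all
  also have "\<dots> = delta (x * y, 1) + delta (y, x) + delta (x, y) + delta (1, x * y)"
    by (simp add: rmul2_add add_ac)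
  finally show ?thesis .
qed

lemma commutator_primitive:
  assumes x: "x \<in> primitive smul \<Delta>" and y: "y \<in> primitive smul \<Delta>"
  shows "x * y - y * x \<in> primitive smul \<Delta>"
proof -
  have "teq2 smul (\<Delta> (smul (-1) (y * x) + x * y)) (fscale (-1) (\<Delta> (y * x)) + \<Delta> (x * y))"
    by (rule comul_lin)
  also have "teq2 smul \<dots>
     (fscale (-1) (delta (y * x, 1) + delta (x, y) + delta (y, x) + delta (1, y * x))
       + (delta (x * y, 1) + delta (y, x) + delta (x, y) + delta (1, x * y)))"
    by (rule teq2_add[OF teq2_fscale[OF comul_mult_primitive[OF y x]] comul_mult_primitive[OF x y]])
  also have "\<dots> = fscale (-1) (delta (y * x, 1) + delta (1, y * x)) + (delta (x * y, 1) + delta (1, x * y))"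
    by (simp add: fscale_def fun_eq_iff algebra_simps)
  also have "teq2 smul \<dots> (delta (smul (-1) (y * x) + x * y, 1) + delta (1, smul (-1) (y * x) + x * y))"
    by (rule teq2_sym[OF teq2_primitive_tensor_lin])
  finally show ?thesis by (simp add: primitive_def)
qed

lemma antipode_one: "S 1 = 1"
  using antipode_left[of 1] lin_ext_mult_cong[OF antipode_lin_map lin_map_id comul_one, of 1]
  by (simp add: counit_one)

lemma counit_primitive:
  assumes x: "x \<in> primitive smul \<Delta>"
  shows "\<epsilon> x = 0"
proof -
  have "smul (\<epsilon> x) 1 + x = x"
    using counit_left[of x] lin_ext_counit_cong[OF primitive_comul[OF x]]
    by (simp add: V.lin_ext_add counit_one)
  then show ?thesis by simp
qed

lemma antipode_primitive:
  assumes x: "x \<in> primitive smul \<Delta>"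
  shows "S x = - x"
proof -
  have "S x + x = 0"
    using antipode_left[of x] lin_ext_mult_cong[OF antipode_lin_map lin_map_id primitive_comul[OF x], of 1]
    by (simp add: V.lin_ext_add antipode_one counit_primitive[OF x])
  then show ?thesis by (simp add: eq_neg_iff_add_eq_0)
qed

lemma lie_algebra_primitive: "lie_algebra smul (primitive smul \<Delta>) (\<lambda>a b. a * b - b * a)"
  unfolding lie_algebra_def
  by (simp add: V.vector_space_axioms subspace_primitive commutator_primitive
      scale_mult_left scale_mult_right algebra_simps)

end

section \<open>Rota-Baxter systems of Hopf algebras\<close>

locale rbs_hopf_system = hopf_algebra +
  fixes B1 B2
  assumes rbs_hopf: "rbs_hopf smul \<Delta> \<epsilon> S B1 B2"
begin

lemma
  shows B1_coalg_hom: "coalg_hom smul \<Delta> \<epsilon> B1"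
    and B2_coalg_hom: "coalg_hom smul \<Delta> \<epsilon> B2"
    and B1_one: "B1 1 = 1"
    and B2_one: "B2 1 = 1"
    and B1_rota_baxter: "B1 a * B1 b = B1 (lin_ext smul (\<Delta> a) (\<lambda>p. B1 (fst p) * b * S (B2 (snd p))))"
    and B2_rota_baxter: "B2 a * B2 b = B2 (lin_ext smul (\<Delta> a) (\<lambda>p. B1 (fst p) * b * S (B2 (snd p))))"
  using rbs_hopf unfolding rbs_hopf_def by auto

lemma lin_ext_rota_baxter_cong:
  assumes "teq2 smul t u" and "fin_supp t" and "fin_supp u"
  shows "lin_ext smul t (\<lambda>p. B1 (fst p) * b * S (B2 (snd p))) = lin_ext smul u (\<lambda>p. B1 (fst p) * b * S (B2 (snd p)))"
  using assms
  by (intro lin_ext_mult_cong coalg_hom_lin_map[OF B1_coalg_hom] lin_map_comp[OF antipode_lin_map]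
      coalg_hom_lin_map[OF B2_coalg_hom])

lemma rota_baxter_grouplike:
  assumes "g \<in> grouplike smul \<Delta>"
  shows "B1 g * B1 b = B1 (B1 g * b * S (B2 g))" and "B2 g * B2 b = B2 (B1 g * b * S (B2 g))"
  using B1_rota_baxter[of g b] B2_rota_baxter[of g b] lin_ext_rota_baxter_cong[OF grouplike_comul[OF assms]]
  by simp_all

lemma rbs_group_grouplike: "rbs_group (grouplike_group smul \<Delta>) B1 (S \<circ> B2)"
  unfolding rbs_group_def
proof (intro conjI ballI)
  fix a b
  assume a: "a \<in> carrier (grouplike_group smul \<Delta>)" and b: "b \<in> carrier (grouplike_group smul \<Delta>)"
  have "S (B2 b) * S (B2 a) = S (B2 a * B2 b)"
    using a b by (simp add: antipode_mult_grouplike coalg_hom_grouplike B2_coalg_hom)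
  also have "\<dots> = S (B2 (B1 a * b * S (B2 a)))"
    using a by (simp add: rota_baxter_grouplike)
  finally show "(S \<circ> B2) b \<otimes>\<^bsub>grouplike_group smul \<Delta>\<^esub> (S \<circ> B2) a =
      (S \<circ> B2) (B1 a \<otimes>\<^bsub>grouplike_group smul \<Delta>\<^esub> b \<otimes>\<^bsub>grouplike_group smul \<Delta>\<^esub> (S \<circ> B2) a)"
    by simp
qed (simp_all add: group_grouplike_group rota_baxter_grouplike coalg_hom_grouplike antipode_grouplike
      B1_coalg_hom B2_coalg_hom)

lemma rota_baxter_primitive:
  assumes "x \<in> primitive smul \<Delta>"
  shows "B1 x * B1 b = B1 (B1 x * b - b * B2 x)" and "B2 x * B2 b = B2 (B1 x * b - b * B2 x)"
proof -
  have "lin_ext smul (\<Delta> x) (\<lambda>p. B1 (fst p) * b * S (B2 (snd p))) = B1 x * b - b * B2 x"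
    using lin_ext_rota_baxter_cong[OF primitive_comul[OF assms]]
      antipode_primitive[OF coalg_hom_primitive[OF B2_coalg_hom B2_one assms]]
    by (simp add: V.lin_ext_add B1_one B2_one antipode_one)
  then show "B1 x * B1 b = B1 (B1 x * b - b * B2 x)" and "B2 x * B2 b = B2 (B1 x * b - b * B2 x)"
    using B1_rota_baxter[of x b] B2_rota_baxter[of x b] by simp_all
qed

lemma rota_baxter_lie_identities:
  assumes a: "a \<in> primitive smul \<Delta>" and b: "b \<in> primitive smul \<Delta>"
  defines "R \<equiv> (B1 a * B1 b - B1 b * B1 a) - (B2 a * B2 b - B2 b * B2 a)"
  shows "B1 a * B1 b - B1 b * B1 a = B1 R" and "B2 a * B2 b - B2 b * B2 a = B2 R"
proof -
  let ?D = "\<lambda>y. B1 y - B2 y"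
  have R: "R = (B1 a * ?D b - ?D b * B2 a) - (B1 b * ?D a - ?D a * B2 b)"
    unfolding R_def by (simp add: algebra_simps)
  have D: "B1 (B1 x * ?D y - ?D y * B2 x) = B1 x * B1 y" "B2 (B1 x * ?D y - ?D y * B2 x) = B2 x * B2 y"
    if x: "x \<in> primitive smul \<Delta>" and y: "y \<in> primitive smul \<Delta>" for x y
    using rota_baxter_primitive[OF x, of "?D y"] rota_baxter_primitive[OF y, of 1]
    by (simp_all add: B1_one B2_one)
  have "B1 R = B1 (B1 a * ?D b - ?D b * B2 a) - B1 (B1 b * ?D a - ?D a * B2 b)"
    unfolding R by (rule lin_map_diff[OF coalg_hom_lin_map[OF B1_coalg_hom]])
  then show "B1 a * B1 b - B1 b * B1 a = B1 R"
    by (simp add: D a b)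
  have "B2 R = B2 (B1 a * ?D b - ?D b * B2 a) - B2 (B1 b * ?D a - ?D a * B2 b)"
    unfolding R by (rule lin_map_diff[OF coalg_hom_lin_map[OF B2_coalg_hom]])
  then show "B2 a * B2 b - B2 b * B2 a = B2 R"
    by (simp add: D a b)
qed

lemma rbs_lie_primitive: "rbs_lie smul (primitive smul \<Delta>) (\<lambda>a b. a * b - b * a) B1 (\<lambda>x. - B2 x)"
  unfolding rbs_lie_def
  using lie_algebra_primitive rota_baxter_lie_identities
    coalg_hom_primitive[OF B1_coalg_hom B1_one] coalg_hom_primitive[OF B2_coalg_hom B2_one]
    V.subspace_neg[OF subspace_primitive]
    coalg_hom_lin_map[OF B1_coalg_hom] coalg_hom_lin_map[OF B2_coalg_hom]
  by (auto simp: lin_map_def)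

end

theorem mainTheorem8:
  fixes smul :: "'k::field_char_0 \<Rightarrow> 'h::ring_1 \<Rightarrow> 'h"
    and \<Delta> :: "'h \<Rightarrow> ('h \<times> 'h \<Rightarrow> 'k)"
    and \<epsilon> :: "'h \<Rightarrow> 'k"
    and S B1 B2 :: "'h \<Rightarrow> 'h"
  assumes "rbs_hopf smul \<Delta> \<epsilon> S B1 B2"
  shows "(\<forall>g\<in>grouplike smul \<Delta>. B1 g \<in> grouplike smul \<Delta> \<and> B2 g \<in> grouplike smul \<Delta>)
       \<and> (\<forall>x\<in>primitive smul \<Delta>. B1 x \<in> primitive smul \<Delta> \<and> B2 x \<in> primitive smul \<Delta>)
       \<and> rbs_group (grouplike_group smul \<Delta>) B1 (S \<circ> B2)
       \<and> rbs_lie smul (primitive smul \<Delta>) (\<lambda>a b. a * b - b * a) B1 (\<lambda>x. - B2 x)"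
proof -
  interpret rbs_hopf_system smul \<Delta> \<epsilon> S B1 B2
    using assms by unfold_locales (simp_all add: rbs_hopf_def)
  show ?thesis
    using coalg_hom_grouplike coalg_hom_primitive B1_coalg_hom B2_coalg_hom B1_one B2_one
      rbs_group_grouplike rbs_lie_primitive
    by blast
qed

end
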